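(* Let $k,h\ge1$ and let $G=\vartheta_{B_k}^{\mathcal B,h}$ be a $k$-molecule. Then (1) the connectivity of $G$ is $k$; (2) $B_k$ is an edge cover set of $G$ of minimum cardinality, so $\mathrm{Cycl}(G)=k$; and (3) $\mathrm{Ent}(G)=k$.
   Context: Graphs are finite and undirected. A graph is $k$-connected if one must remove at least $k$ vertices to disconnect it; the connectivity is the largest such $k$ (by convention the complete graph $K_m$, $m\ge3$, has connectivity $m-1$). $k$-molecule: for $k,h\ge1$, $B_k=\{b_1,\dots,b_k\}$ and a set $\mathcal B$ of edges among vertices of $B_k$, $\vartheta_{B_k}^{\mathcal B,h}$ is the graph with vertex set $B_k\cup\{v_1,\dots,v_h\}$ and edge set $\mathcal B\cup\{v_ib_j:1\le i\le h,1\le j\le k\}$, where it is required that $h\ge k-k'$, $k'$ being the connectivity of the subgraph induced by $B_k$. An edge cover set of $G$ is a set $X\subseteq V_G$ containing at least one endpoint of every edge (i.e. a vertex cover). $\mathrm{Cycl}(G)$ (cyclicity) is the minimum size of a feedback vertex set of the symmetric digraph of $G$ (each edge viewed as two opposite arcs, so each edge forms a directed 2-cycle), which equals the minimum size of an edge cover set. Entanglement: in the game $\mathrm{Ent}(G,k)$ Thief plays against $k$ cops. Initially no cop is placed and Thief picks a vertex. Each round, Cops may do nothing, place a new cop (at most $k$ in total) on Thief's current vertex, or move a placed cop to Thief's current vertex; then Thief must move along an edge to an adjacent vertex not occupied by a cop, and is caught if he cannot. Infinite plays are won by Thief. $\mathrm{Ent}(G)$ is the least $k$ for which Cops have a winning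 strategy. *)

theory Defs
  imports Main
begin

definition graph :: "'a set \<Rightarrow> 'a set set \<Rightarrow> bool" where
  "graph V E \<longleftrightarrow> finite V \<and> (\<forall>e\<in>E. e \<subseteq> V \<and> card e = 2)"

definition adj :: "'a set set \<Rightarrow> 'a \<Rightarrow> 'a \<Rightarrow> bool" where
  "adj E x y \<longleftrightarrow> x \<noteq> y \<and> {x, y} \<in> E"

definition connected_on :: "'a set \<Rightarrow> 'a set set \<Rightarrow> bool" where
  "connected_on V E \<longleftrightarrow>
     (\<forall>x\<in>V. \<forall>y\<in>V. (\<lambda>a b. a \<in> V \<and> b \<in> V \<and> adj E a b)\<^sup>*\<^sup>* x y)"

text \<open>Connectivity: the least number of vertices whose removal disconnects the graph or
  leaves at most one vertex (so K_m has connectivity m-1).\<close>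
definition connectivity :: "'a set \<Rightarrow> 'a set set \<Rightarrow> nat" where
  "connectivity V E =
     Min {card S | S. S \<subseteq> V \<and> (\<not> connected_on (V - S) E \<or> card (V - S) \<le> 1)}"

definition is_edge_cover :: "'a set \<Rightarrow> 'a set set \<Rightarrow> 'a set \<Rightarrow> bool" where
  "is_edge_cover V E X \<longleftrightarrow> X \<subseteq> V \<and> (\<forall>e\<in>E. e \<inter> X \<noteq> {})"

text \<open>Feedback vertex set of the symmetric digraph of (V,E): every edge gives the two
  arcs a->b and b->a; removing X leaves no directed cycle.\<close>
definition is_fvs_sym :: "'a set \<Rightarrow> 'a set set \<Rightarrow> 'a set \<Rightarrow> bool" where
  "is_fvs_sym V E X \<longleftrightarrow> X \<subseteq> V \<and>
     \<not> (\<exists>x. (\<lambda>a b. a \<in> V - X \<and> b \<in> V - X \<and> adj E a b)\<^sup>+\<^sup>+ x x)"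

definition cyclicity :: "'a set \<Rightarrow> 'a set set \<Rightarrow> nat" where
  "cyclicity V E = Min {card X | X. is_fvs_sym V E X}"

text \<open>Cops' positions are a set C of occupied vertices (cops always go to the Thief's
  current vertex, which is never occupied, so distinct cops occupy distinct vertices and the
  number of placed cops is card C).\<close>
definition legal_cop_move :: "nat \<Rightarrow> 'a \<Rightarrow> 'a set \<Rightarrow> 'a set \<Rightarrow> bool" where
  "legal_cop_move k v C C' \<longleftrightarrow>
     C' = C \<or> (card C < k \<and> C' = insert v C) \<or> (\<exists>c\<in>C. C' = insert v (C - {c}))"

text \<open>A Cops strategy maps the history of Thief positions [t 0, ..., t n] (all Cops moves are
  determined by the strategy) to the new cop configuration in round n.\<close>
type_synonym 'a cop_strategy = "'a list \<Rightarrow> 'a set"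

fun cop_config :: "'a cop_strategy \<Rightarrow> (nat \<Rightarrow> 'a) \<Rightarrow> nat \<Rightarrow> 'a set" where
  "cop_config \<sigma> t 0 = {}"
| "cop_config \<sigma> t (Suc n) = \<sigma> (map t [0..<Suc n])"

definition consistent_prefix ::
  "'a set \<Rightarrow> 'a set set \<Rightarrow> 'a cop_strategy \<Rightarrow> (nat \<Rightarrow> 'a) \<Rightarrow> nat \<Rightarrow> bool" where
  "consistent_prefix V E \<sigma> t n \<longleftrightarrow> t 0 \<in> V \<and>
     (\<forall>j<n. adj E (t j) (t (Suc j)) \<and> t (Suc j) \<notin> cop_config \<sigma> t (Suc j))"

text \<open>\<sigma> is a winning strategy for k cops: it always prescribes legal moves, and there is
  no infinite play consistent with it (infinite plays are won by Thief; a finite play ends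
  with Thief caught).\<close>
definition cops_winning :: "'a set \<Rightarrow> 'a set set \<Rightarrow> nat \<Rightarrow> 'a cop_strategy \<Rightarrow> bool" where
  "cops_winning V E k \<sigma> \<longleftrightarrow>
     (\<forall>t n. consistent_prefix V E \<sigma> t n \<longrightarrow>
        legal_cop_move k (t n) (cop_config \<sigma> t n) (cop_config \<sigma> t (Suc n)))
   \<and> \<not> (\<exists>t. \<forall>n. consistent_prefix V E \<sigma> t n)"

definition entanglement :: "'a set \<Rightarrow> 'a set set \<Rightarrow> nat" where
  "entanglement V E = (LEAST k. \<exists>\<sigma>. cops_winning V E k \<sigma>)"

definition mol_V :: "'a set \<Rightarrow> 'a set \<Rightarrow> 'a set" where
  "mol_V B W = B \<union> W"

definition mol_E :: "'a set \<Rightarrow> 'a set set \<Rightarrow> 'a set \<Rightarrow> 'a set set" where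
  "mol_E B \<B> W = \<B> \<union> {{w, b} | w b. w \<in> W \<and> b \<in> B}"

text \<open>B = B_k (k vertices), \<B> a set of edges among B, W = {v_1,...,v_h} (h new vertices),
  with h \<ge> k - k' where k' is the connectivity of the subgraph induced by B.\<close>
definition is_molecule :: "nat \<Rightarrow> nat \<Rightarrow> 'a set \<Rightarrow> 'a set set \<Rightarrow> 'a set \<Rightarrow> bool" where
  "is_molecule k h B \<B> W \<longleftrightarrow>
     k \<ge> 1 \<and> h \<ge> 1 \<and> finite B \<and> finite W \<and> card B = k \<and> card W = h \<and> B \<inter> W = {} \<and>
     \<B> \<subseteq> {{x, y} | x y. x \<in> B \<and> y \<in> B \<and> x \<noteq> y} \<and>
     int h \<ge> int k - int (connectivity B \<B>)"

end

theory Submission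
  imports Defs
begin

text \<open>Every vertex of W is joined to all of B. Removing fewer than k vertices therefore leaves
  either a vertex of W and a vertex of B, through which everything left stays connected, or all
  of W at the cost of h \<ge> k - k' vertices, so that fewer than k' vertices are removed from the
  k'-connected graph on B; removing B isolates the vertices of W. The same count lets the Thief
  always escape fewer than k cops, and shows that fewer than k vertices cannot cover all edges.
  Conversely k cops win by occupying the vertices of B the Thief visits, and since every edge is
  a 2-cycle of the symmetric digraph, feedback vertex sets are exactly edge covers.\<close>

section \<open>Connectivity\<close>

lemma adj_sym: "adj E x y \<longleftrightarrow> adj E y x"
  unfolding adj_def by (auto simp: insert_commute)

lemma connected_on_mono:
  assumes "E1 \<subseteq> E2" "connected_on U E1"
  shows "connected_on U E2"
  unfolding connected_on_def
proof (intro ballI)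
  fix x y assume "x \<in> U" "y \<in> U"
  with assms(2) have "(\<lambda>a b. a \<in> U \<and> b \<in> U \<and> adj E1 a b)\<^sup>*\<^sup>* x y"
    unfolding connected_on_def by blast
  then show "(\<lambda>a b. a \<in> U \<and> b \<in> U \<and> adj E2 a b)\<^sup>*\<^sup>* x y"
    by (rule rtranclp_mono[THEN predicate2D, rotated]) (use assms(1) in \<open>auto simp: adj_def\<close>)
qed

lemma connected_on_if_all_reach:
  assumes "\<And>x. x \<in> U \<Longrightarrow> (\<lambda>a b. a \<in> U \<and> b \<in> U \<and> adj E a b)\<^sup>*\<^sup>* x c"
  shows "connected_on U E"
  unfolding connected_on_def
proof (intro ballI)
  let ?R = "\<lambda>a b. a \<in> U \<and> b \<in> U \<and> adj E a b"
  fix x y assume "x \<in> U" "y \<in> U"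
  have "symp ?R" by (rule sympI) (auto simp: adj_sym)
  then have "?R\<^sup>*\<^sup>* c y" using assms[OF \<open>y \<in> U\<close>] by (blast dest: sympD[OF symp_rtranclp])
  with assms[OF \<open>x \<in> U\<close>] show "?R\<^sup>*\<^sup>* x y" by (rule rtranclp_trans)
qed

lemma finite_card_subsets: "finite V \<Longrightarrow> finite {card S | S. S \<subseteq> V \<and> P S}"
  by (rule finite_subset[of _ "card ` Pow V"]) auto

lemma connectivity_eqI:
  assumes "finite V" "S \<subseteq> V" "\<not> connected_on (V - S) E \<or> card (V - S) \<le> 1"
    and "\<And>T. T \<subseteq> V \<Longrightarrow> card T < card S \<Longrightarrow> connected_on (V - T) E \<and> 2 \<le> card (V - T)"
  shows "connectivity V E = card S"
  unfolding connectivity_def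
proof (rule Min_eqI)
  show "finite {card T | T. T \<subseteq> V \<and> (\<not> connected_on (V - T) E \<or> card (V - T) \<le> 1)}"
    using assms(1) by (rule finite_card_subsets)
  show "card S \<in> {card T | T. T \<subseteq> V \<and> (\<not> connected_on (V - T) E \<or> card (V - T) \<le> 1)}"
    using assms(2,3) by blast
  fix n assume "n \<in> {card T | T. T \<subseteq> V \<and> (\<not> connected_on (V - T) E \<or> card (V - T) \<le> 1)}"
  then obtain T where T: "n = card T" "T \<subseteq> V" "\<not> connected_on (V - T) E \<or> card (V - T) \<le> 1"
    by blast
  have "\<not> card T < card S"
  proof
    assume "card T < card S"
    with assms(4)[OF T(2)] T(3) show False by linarith
  qed
  with T(1) show "card S \<le> n" by simp
qed

lemma connected_on_if_card_lt_connectivity: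
  assumes "finite V" "S \<subseteq> V" "card S < connectivity V E"
  shows "connected_on (V - S) E \<and> 2 \<le> card (V - S)"
proof (rule ccontr)
  assume "\<not> ?thesis"
  with assms(2) have "card S \<in> {card T | T. T \<subseteq> V \<and> (\<not> connected_on (V - T) E \<or> card (V - T) \<le> 1)}"
    by auto
  then have "connectivity V E \<le> card S"
    unfolding connectivity_def by (rule Min_le[OF finite_card_subsets[OF assms(1)]])
  with assms(3) show False by simp
qed

lemma neighbour_outside_if_card_lt_connectivity:
  assumes "finite V" "S \<subseteq> V" "card S < connectivity V E" "v \<in> V"
  shows "\<exists>u\<in>V - S. adj E v u"
proof -
  let ?S = "S - {v}"
  let ?R = "\<lambda>a b. a \<in> V - ?S \<and> b \<in> V - ?S \<and> adj E a b"
  have "card ?S \<le> card S"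
    using assms(1,2) by (meson card_Diff1_le finite_subset)
  then have conn: "connected_on (V - ?S) E" and two: "2 \<le> card (V - ?S)"
    using connected_on_if_card_lt_connectivity[of V ?S E] assms by auto
  obtain y where y: "y \<in> V - ?S" "y \<noteq> v"
  proof (rule ccontr)
    assume "\<not> thesis"
    with that have "V - ?S \<subseteq> {v}" by blast
    then have "card (V - ?S) \<le> 1" using card_mono[of "{v}"] by fastforce
    with two show False by simp
  qed
  have "?R\<^sup>*\<^sup>* v y" using conn y assms(4) unfolding connected_on_def by blast
  then show ?thesis
  proof (cases rule: converse_rtranclpE)
    case base with y show ?thesis by simp
  next
    case (step u) then show ?thesis unfolding adj_def by auto
  qed
qed

section \<open>Cyclicity\<close>

lemma is_fvs_sym_iff_is_edge_cover:
  assumes "graph V E"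
  shows "is_fvs_sym V E X \<longleftrightarrow> is_edge_cover V E X"
proof -
  let ?R = "\<lambda>a b. a \<in> V - X \<and> b \<in> V - X \<and> adj E a b"
  have "(\<exists>x. ?R\<^sup>+\<^sup>+ x x) \<longleftrightarrow> (\<exists>e\<in>E. e \<inter> X = {})"
  proof
    assume "\<exists>x. ?R\<^sup>+\<^sup>+ x x"
    then obtain x where "?R\<^sup>+\<^sup>+ x x" ..
    then obtain y where "?R x y" by (blast dest: tranclpD)
    then have "{x, y} \<in> E" "{x, y} \<inter> X = {}" unfolding adj_def by auto
    then show "\<exists>e\<in>E. e \<inter> X = {}" by blast
  next
    assume "\<exists>e\<in>E. e \<inter> X = {}"
    then obtain e where e: "e \<in> E" "e \<inter> X = {}" ..
    with assms have "e \<subseteq> V" "card e = 2" unfolding graph_def by auto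
    then obtain x y where "e = {x, y}" "x \<noteq> y" unfolding card_2_iff by blast
    with e \<open>e \<subseteq> V\<close> have "?R x y" "?R y x" by (auto simp: adj_def insert_commute)
    then have "?R\<^sup>+\<^sup>+ x x" by (rule tranclp.trancl_into_trancl[OF tranclp.r_into_trancl])
    then show "\<exists>x. ?R\<^sup>+\<^sup>+ x x" ..
  qed
  then show ?thesis unfolding is_fvs_sym_def is_edge_cover_def by (simp add: disjoint_iff)
qed

lemma cyclicity_eqI:
  assumes "graph V E" "is_edge_cover V E X" "\<And>Y. is_edge_cover V E Y \<Longrightarrow> card X \<le> card Y"
  shows "cyclicity V E = card X"
  unfolding cyclicity_def is_fvs_sym_iff_is_edge_cover[OF assms(1)]
proof (rule Min_eqI)
  have "finite V" using assms(1) unfolding graph_def by simp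
  then show "finite {card Y | Y. is_edge_cover V E Y}"
    unfolding is_edge_cover_def by (rule finite_card_subsets)
  show "card X \<in> {card Y | Y. is_edge_cover V E Y}" using assms(2) by blast
  fix n assume "n \<in> {card Y | Y. is_edge_cover V E Y}"
  with assms(3) show "card X \<le> n" by blast
qed

section \<open>Entanglement\<close>

lemma legal_cop_move_card:
  assumes "legal_cop_move m v C C'" "finite C" "card C \<le> m"
  shows "finite C' \<and> card C' \<le> m"
  using assms unfolding legal_cop_move_def
  by (auto intro!: card_insert_le_m1 simp: card_gt_0_iff)
    (metis card_gt_0_iff empty_iff order.strict_trans2)

lemma cop_config_set_inter:
  "cop_config (\<lambda>xs. set xs \<inter> X) t n = t ` {..<n} \<inter> X"
  by (cases n) (simp_all only: cop_config.simps set_map set_upt atLeast0LessThan image_empty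
    lessThan_0 Int_empty_left)

text \<open>Cops who occupy every vertex of an edge cover X the Thief visits win: every move of the
  Thief has an endpoint in X, so he would visit infinitely many distinct vertices of X.\<close>

lemma cops_winning_edge_cover:
  assumes cover: "is_edge_cover V E X" and "finite X"
  shows "cops_winning V E (card X) (\<lambda>xs. set xs \<inter> X)"
  unfolding cops_winning_def cop_config_set_inter
proof (intro conjI allI impI notI)
  fix t and n :: nat
  let ?C = "t ` {..<n} \<inter> X"
  show "legal_cop_move (card X) (t n) ?C (t ` {..<Suc n} \<inter> X)"
  proof (cases "t n \<in> X - ?C")
    case True
    then have "card ?C < card X" using \<open>finite X\<close> by (intro psubset_card_mono) auto
    with True show ?thesis unfolding legal_cop_move_def by (auto simp: lessThan_Suc)
  next
    case False
    then show ?thesis unfolding legal_cop_move_def by (auto simp: lessThan_Suc)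
  qed
next
  assume "\<exists>t. \<forall>n. consistent_prefix V E (\<lambda>xs. set xs \<inter> X) t n"
  then obtain t where "\<And>n. consistent_prefix V E (\<lambda>xs. set xs \<inter> X) t n" by blast
  then have step: "adj E (t j) (t (Suc j)) \<and> t (Suc j) \<notin> t ` {..<Suc j} \<inter> X" for j
    unfolding consistent_prefix_def cop_config_set_inter by blast
  let ?P = "{n. t n \<in> X}"
  have "t i \<noteq> t j" if "i < j" "j \<in> ?P" for i j
  proof -
    obtain j' where j': "j = Suc j'" using \<open>i < j\<close> by (cases j) auto
    then have "t i \<in> t ` {..<Suc j'}" using \<open>i < j\<close> by simp
    then show ?thesis using step[of j'] that(2) j' by auto
  qed
  then have "inj_on t ?P"
    by (intro inj_onI) (metis linorder_neqE_nat)
  moreover have "finite (t ` ?P)"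
    using \<open>finite X\<close> by (rule finite_subset[rotated]) blast
  ultimately have "finite ?P" by (rule finite_imageD[rotated])
  then obtain m where "\<forall>n\<in>?P. n < m" using finite_nat_set_iff_bounded by blast
  moreover have "{t m, t (Suc m)} \<inter> X \<noteq> {}"
    using cover step[of m] unfolding is_edge_cover_def adj_def by blast
  ultimately show False by auto
qed

text \<open>The Thief's play against a strategy depending on the whole history is built by
  course-of-values recursion: history f x0 n is the list x0, ..., xn with x(i+1) = f [x0, ..., xi].\<close>

primrec history :: "('a list \<Rightarrow> 'a) \<Rightarrow> 'a \<Rightarrow> nat \<Rightarrow> 'a list" where
  "history f x0 0 = [x0]"
| "history f x0 (Suc n) = history f x0 n @ [f (history f x0 n)]"

lemma map_last_history: "map (\<lambda>i. last (history f x0 i)) [0..<Suc n] = history f x0 n"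
  by (induction n) auto

lemma not_cops_winning_if_escape:
  assumes "v0 \<in> V"
    and escape: "\<And>v C. v \<in> V \<Longrightarrow> finite C \<Longrightarrow> card C \<le> m \<Longrightarrow> \<exists>u\<in>V. adj E v u \<and> u \<notin> C"
  shows "\<not> cops_winning V E m \<sigma>"
proof
  assume win: "cops_winning V E m \<sigma>"
  define f where "f xs = (SOME u. u \<in> V \<and> adj E (last xs) u \<and> u \<notin> \<sigma> xs)" for xs
  have f: "f xs \<in> V \<and> adj E (last xs) (f xs) \<and> f xs \<notin> \<sigma> xs"
    if "\<exists>u\<in>V. adj E (last xs) u \<and> u \<notin> \<sigma> xs" for xs
    unfolding f_def by (rule someI_ex) (use that in blast)
  define t where "t i = last (history f v0 i)" for i
  have t_Suc: "t (Suc n) = f (map t [0..<Suc n])" for n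
    unfolding t_def map_last_history by simp
  have "consistent_prefix V E \<sigma> t n \<and> t n \<in> V
      \<and> finite (cop_config \<sigma> t n) \<and> card (cop_config \<sigma> t n) \<le> m" for n
  proof (induction n)
    case 0
    then show ?case using \<open>v0 \<in> V\<close> unfolding consistent_prefix_def t_def by simp
  next
    case (Suc n)
    then have "legal_cop_move m (t n) (cop_config \<sigma> t n) (cop_config \<sigma> t (Suc n))"
      using win unfolding cops_winning_def by blast
    then have C: "finite (cop_config \<sigma> t (Suc n)) \<and> card (cop_config \<sigma> t (Suc n)) \<le> m"
      by (rule legal_cop_move_card) (use Suc.IH in blast)+
    then have "\<exists>u\<in>V. adj E (t n) u \<and> u \<notin> cop_config \<sigma> t (Suc n)"
      using escape[of "t n"] Suc.IH by blast
    then have "t (Suc n) \<in> V \<and> adj E (t n) (t (Suc n)) \<and> t (Suc n) \<notin> cop_config \<sigma> t (Suc n)"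
      using f[of "map t [0..<Suc n]"] unfolding t_Suc
      by (simp del: upt_Suc add: last_map)
    with Suc.IH C show ?case unfolding consistent_prefix_def by (auto simp: less_Suc_eq)
  qed
  with win show False unfolding cops_winning_def by blast
qed

lemma entanglement_eq_card_edge_cover:
  assumes "is_edge_cover V E X" "finite X" "X \<noteq> {}"
    and escape: "\<And>v C. v \<in> V \<Longrightarrow> finite C \<Longrightarrow> card C < card X \<Longrightarrow> \<exists>u\<in>V. adj E v u \<and> u \<notin> C"
  shows "entanglement V E = card X"
  unfolding entanglement_def
proof (rule Least_equality)
  show "\<exists>\<sigma>. cops_winning V E (card X) \<sigma>" using cops_winning_edge_cover assms(1,2) by blast
next
  fix m assume "\<exists>\<sigma>. cops_winning V E m \<sigma>"
  then obtain \<sigma> where win: "cops_winning V E m \<sigma>" ..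
  obtain v0 where "v0 \<in> V" using assms(1,3) unfolding is_edge_cover_def by blast
  show "card X \<le> m"
  proof (rule ccontr)
    assume "\<not> card X \<le> m"
    then have "\<not> cops_winning V E m \<sigma>"
      by (intro not_cops_winning_if_escape[OF \<open>v0 \<in> V\<close>] escape) auto
    with win show False by contradiction
  qed
qed

section \<open>Molecules\<close>

locale molecule =
  fixes k h :: nat and B W :: "'a set" and Bb :: "'a set set"
  assumes is_molecule: "is_molecule k h B Bb W"
begin

abbreviation "V \<equiv> mol_V B W"
abbreviation "E \<equiv> mol_E B Bb W"

lemma finite_B: "finite B" and finite_W: "finite W" and card_B: "card B = k"
  and card_W: "card W = h" and disjoint: "B \<inter> W = {}" and B_nonempty: "B \<noteq> {}"
  and Bb_edges: "Bb \<subseteq> {{x, y} | x y. x \<in> B \<and> y \<in> B \<and> x \<noteq> y}"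
  and k_le: "k \<le> h + connectivity B Bb"
  using is_molecule unfolding is_molecule_def by auto

lemma finite_V: "finite V"
  using finite_B finite_W by (simp add: mol_V_def)

lemma adj_W_B: "w \<in> W \<Longrightarrow> b \<in> B \<Longrightarrow> adj E w b"
  using disjoint unfolding adj_def mol_E_def by auto

lemma adj_B_W: "b \<in> B \<Longrightarrow> w \<in> W \<Longrightarrow> adj E b w"
  using adj_W_B adj_sym by metis

lemma adj_if_adj_Bb: "adj Bb x y \<Longrightarrow> adj E x y"
  unfolding adj_def mol_E_def by auto

lemma edge_cases: "e \<in> E \<Longrightarrow> \<exists>x y. e = {x, y} \<and> x \<in> B \<and> (y \<in> B \<and> x \<noteq> y \<or> y \<in> W)"
  using Bb_edges unfolding mol_E_def by blast

lemma graph_V_E: "graph V E"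
  unfolding graph_def
proof (intro conjI ballI finite_V)
  fix e assume "e \<in> E"
  then obtain x y where e: "e = {x, y}" "x \<in> B" and y: "y \<in> B \<and> x \<noteq> y \<or> y \<in> W"
    using edge_cases by blast
  moreover from y have "x \<noteq> y" using \<open>x \<in> B\<close> disjoint by blast
  ultimately show "e \<subseteq> V" "card e = 2" by (auto simp: mol_V_def)
qed

lemma W_independent: "x \<in> W \<Longrightarrow> y \<in> W \<Longrightarrow> \<not> adj E x y"
  using edge_cases disjoint unfolding adj_def by (metis disjoint_iff doubleton_eq_iff)

lemma B_edge_cover: "is_edge_cover V E B"
  using edge_cases unfolding is_edge_cover_def mol_V_def by blast

lemma card_inter_B_lt_connectivity:
  assumes "finite C" "W \<subseteq> C" "card C < k"
  shows "card (C \<inter> B) < connectivity B Bb"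
proof -
  have "card (C \<inter> B) + card W = card ((C \<inter> B) \<union> W)"
    using assms(1) finite_W disjoint by (intro card_Un_disjoint[symmetric]) auto
  also have "\<dots> \<le> card C" using assms(1,2) by (intro card_mono) auto
  finally show ?thesis using assms(3) k_le card_W by linarith
qed

lemma B_not_subset_if_card_lt:
  assumes "finite C" "card C < k"
  shows "\<exists>b\<in>B. b \<notin> C"
proof (rule ccontr)
  assume "\<not> ?thesis"
  then have "card B \<le> card C" using assms(1) by (intro card_mono) auto
  with assms(2) card_B show False by simp
qed

lemma thief_escapes:
  assumes "v \<in> V" "finite C" "card C < k"
  shows "\<exists>u\<in>V. adj E v u \<and> u \<notin> C"
proof (cases "v \<in> W")
  case True
  obtain b where "b \<in> B" "b \<notin> C" using B_not_subset_if_card_lt[OF assms(2,3)] ..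
  with adj_W_B[OF True] show ?thesis unfolding mol_V_def by blast
next
  case False
  then have "v \<in> B" using assms(1) unfolding mol_V_def by blast
  show ?thesis
  proof (cases "W \<subseteq> C")
    case True
    with assms(2,3) have "card (C \<inter> B) < connectivity B Bb"
      by (intro card_inter_B_lt_connectivity)
    with finite_B \<open>v \<in> B\<close> obtain u where "u \<in> B - C \<inter> B" "adj Bb v u"
      using neighbour_outside_if_card_lt_connectivity[of B "C \<inter> B" Bb v] by blast
    with adj_if_adj_Bb show ?thesis unfolding mol_V_def by blast
  next
    case False
    then obtain w where "w \<in> W" "w \<notin> C" by blast
    with adj_B_W[OF \<open>v \<in> B\<close>] show ?thesis unfolding mol_V_def by blast
  qed
qed

lemma card_edge_cover_ge:
  assumes cover: "is_edge_cover V E X"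
  shows "k \<le> card X"
proof (rule ccontr)
  assume "\<not> k \<le> card X"
  then have lt: "card X < k" by simp
  have "finite X" using cover finite_V finite_subset unfolding is_edge_cover_def by blast
  then obtain b where "b \<in> B" "b \<notin> X" using B_not_subset_if_card_lt lt by blast
  moreover obtain u where "adj E b u" "u \<notin> X"
    using thief_escapes[OF _ \<open>finite X\<close> lt] \<open>b \<in> B\<close> unfolding mol_V_def by blast
  ultimately have "{b, u} \<in> E" "{b, u} \<inter> X = {}" unfolding adj_def by auto
  with cover show False unfolding is_edge_cover_def by blast
qed

lemma connected_on_Diff_if_card_lt:
  assumes "S \<subseteq> V" "card S < k"
  shows "connected_on (V - S) E \<and> 2 \<le> card (V - S)"
proof (cases "W \<subseteq> S")
  case True
  have "finite S" using assms(1) finite_V finite_subset by blast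
  then have "card (S \<inter> B) < connectivity B Bb"
    using True assms(2) by (rule card_inter_B_lt_connectivity)
  with finite_B have "connected_on (B - S \<inter> B) Bb \<and> 2 \<le> card (B - S \<inter> B)"
    by (intro connected_on_if_card_lt_connectivity) auto
  moreover have "V - S = B - S \<inter> B" using True disjoint unfolding mol_V_def by blast
  moreover have "Bb \<subseteq> E" unfolding mol_E_def by blast
  ultimately show ?thesis using connected_on_mono[of Bb E "V - S"] by simp
next
  case False
  then obtain w where w: "w \<in> W" "w \<notin> S" by blast
  have "finite S" using assms(1) finite_V finite_subset by blast
  then obtain b where b: "b \<in> B" "b \<notin> S" using B_not_subset_if_card_lt assms(2) by blast
  let ?R = "\<lambda>x y. x \<in> V - S \<and> y \<in> V - S \<and> adj E x y"
  have wb: "w \<in> V - S" "b \<in> V - S" "w \<noteq> b" using w b disjoint by (auto simp: mol_V_def)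
  have "?R b w" using wb adj_B_W[OF b(1) w(1)] by blast
  have "?R\<^sup>*\<^sup>* x w" if x: "x \<in> V - S" for x
  proof (cases "x \<in> B")
    case True
    then have "?R x w" using x wb adj_B_W[OF True w(1)] by blast
    then show ?thesis ..
  next
    case False
    then have "x \<in> W" using x unfolding mol_V_def by blast
    then have "?R x b" using x wb adj_W_B[OF _ b(1)] by blast
    with \<open>?R b w\<close> show ?thesis by (blast intro: rtranclp.rtrancl_into_rtrancl)
  qed
  then have "connected_on (V - S) E" by (rule connected_on_if_all_reach)
  moreover have "card {w, b} \<le> card (V - S)"
    using wb finite_V by (intro card_mono) auto
  ultimately show ?thesis using \<open>w \<noteq> b\<close> by simp
qed

lemma W_not_connected: "\<not> connected_on W E \<or> card W \<le> 1"
proof (rule disjCI)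
  assume "\<not> card W \<le> 1"
  then obtain w1 w2 where w: "w1 \<in> W" "w2 \<in> W" "w1 \<noteq> w2"
    using card_le_Suc0_iff_eq[OF finite_W] by auto
  show "\<not> connected_on W E"
  proof
    assume "connected_on W E"
    with w have "(\<lambda>x y. x \<in> W \<and> y \<in> W \<and> adj E x y)\<^sup>*\<^sup>* w1 w2"
      unfolding connected_on_def by blast
    then show False
    proof (cases rule: converse_rtranclpE)
      case base with w show False by simp
    next
      case (step u) with W_independent show False by blast
    qed
  qed
qed

lemma connectivity_eq: "connectivity V E = k"
proof -
  have "V - B = W" using disjoint unfolding mol_V_def by blast
  then have "connectivity V E = card B"
    using finite_V W_not_connected connected_on_Diff_if_card_lt card_B
    by (intro connectivity_eqI) (auto simp: mol_V_def)
  with card_B show ?thesis by simp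
qed

end

theorem mainTheorem5:
  fixes k h :: nat and B W :: "'a set" and \<B> :: "'a set set"
  assumes "is_molecule k h B \<B> W"
  shows "connectivity (mol_V B W) (mol_E B \<B> W) = k
    \<and> is_edge_cover (mol_V B W) (mol_E B \<B> W) B
    \<and> (\<forall>X. is_edge_cover (mol_V B W) (mol_E B \<B> W) X \<longrightarrow> card B \<le> card X)
    \<and> cyclicity (mol_V B W) (mol_E B \<B> W) = k
    \<and> entanglement (mol_V B W) (mol_E B \<B> W) = k"
proof -
  interpret molecule k h B W \<B> using assms by unfold_locales
  have "cyclicity V E = card B"
    using graph_V_E B_edge_cover card_edge_cover_ge card_B by (intro cyclicity_eqI) auto
  moreover have "entanglement V E = card B"
    using B_edge_cover finite_B B_nonempty thief_escapes card_B
    by (intro entanglement_eq_card_edge_cover) auto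
  ultimately show ?thesis
    using connectivity_eq B_edge_cover card_edge_cover_ge card_B by auto
qed

end
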